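(* Let $\phi=\tilde p/p$ be a rational inner function on $\mathbb{D}^2$ with $\deg\phi=(m,n)$ and fix $\zeta_2\in\mathbb{T}$ such that $\tilde p(\cdot,\zeta_2)$ does not vanish on $\mathbb{T}$. Let $\phi_{\zeta_2}=\phi(\cdot,\zeta_2)$. Then for each $\mathfrak p\ge1$ there are constants $0<c\le C$ depending only on $\mathfrak p$ and $m$ (not on $\zeta_2$) with $c\,\epsilon(\phi,\zeta_2)^{1-\mathfrak p}\le\|\phi_{\zeta_2}'\|^{\mathfrak p}_{H^{\mathfrak p}(\mathbb{D})}\le C\,\epsilon(\phi,\zeta_2)^{1-\mathfrak p}$.
   Context: $\phi=\tilde p/p$ where $p\in\mathbb{C}[z_1,z_2]$ has bidegree $(m,n)$, no zeros in $\mathbb{D}^2$, is atoral, and $\tilde p(z)=z_1^mz_2^n\overline{p(1/\bar z_1,1/\bar z_2)}$; for such $\zeta_2$, $\phi_{\zeta_2}$ is a Blaschke product of degree $m$. $\epsilon(\phi,\zeta_2)=\min\{1-|z_1|:\tilde p(z_1,\zeta_2)=0\}$. $\|g\|^{\mathfrak p}_{H^{\mathfrak p}(\mathbb{D})}=\sup_{0<r<1}\frac1{2\pi}\int_{\mathbb{T}}|g(r\zeta)|^{\mathfrak p}|d\zeta|$. *)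

theory Defs
  imports "HOL-Analysis.Analysis"
begin

definition bipoly :: "(nat \<Rightarrow> nat \<Rightarrow> complex) \<Rightarrow> nat \<Rightarrow> nat \<Rightarrow> complex \<Rightarrow> complex \<Rightarrow> complex" where
  "bipoly a m n z1 z2 = (\<Sum>i\<le>m. \<Sum>j\<le>n. a i j * z1 ^ i * z2 ^ j)"

definition has_bidegree :: "(nat \<Rightarrow> nat \<Rightarrow> complex) \<Rightarrow> nat \<Rightarrow> nat \<Rightarrow> bool" where
  "has_bidegree a m n \<longleftrightarrow> (\<forall>i j. (m < i \<or> n < j) \<longrightarrow> a i j = 0)
       \<and> (\<exists>j. a m j \<noteq> 0) \<and> (\<exists>i. a i n \<noteq> 0)"

text \<open>The reflection p~(z) = z1^m z2^n conj(p(1/conj z1, 1/conj z2)), written out as the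
polynomial it is (so it is also defined at z1 = 0 or z2 = 0).\<close>
definition reflect :: "(nat \<Rightarrow> nat \<Rightarrow> complex) \<Rightarrow> nat \<Rightarrow> nat \<Rightarrow> complex \<Rightarrow> complex \<Rightarrow> complex" where
  "reflect a m n z1 z2 = (\<Sum>i\<le>m. \<Sum>j\<le>n. cnj (a i j) * z1 ^ (m - i) * z2 ^ (n - j))"

text \<open>Atoral: p and its reflection have only finitely many common zeros in C^2
(equivalently, no common factor).\<close>
definition atoral :: "(nat \<Rightarrow> nat \<Rightarrow> complex) \<Rightarrow> nat \<Rightarrow> nat \<Rightarrow> bool" where
  "atoral a m n \<longleftrightarrow> finite {(z1, z2). bipoly a m n z1 z2 = 0 \<and> reflect a m n z1 z2 = 0}"

definition eps_phi :: "(nat \<Rightarrow> nat \<Rightarrow> complex) \<Rightarrow> nat \<Rightarrow> nat \<Rightarrow> complex \<Rightarrow> real" where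
  "eps_phi a m n \<zeta> = Inf ((\<lambda>z. 1 - cmod z) ` {z. reflect a m n z \<zeta> = 0})"

definition Hp_norm_pow :: "(complex \<Rightarrow> complex) \<Rightarrow> real \<Rightarrow> ereal" where
  "Hp_norm_pow g q = (SUP r\<in>{0<..<1::real}.
      ereal (1 / (2 * pi) * integral {0..2 * pi} (\<lambda>t. cmod (g (of_real r * cis t)) powr q)))"

end

theory Submission
  imports Defs "HOL-Complex_Analysis.Complex_Analysis"
    "HOL-Computational_Algebra.Fundamental_Theorem_Algebra"
begin

text \<open>
  The slice \<open>p(\<cdot>,\<zeta>)\<close> has no zeros in the closed disc: on the circle it
  vanishes together with \<open>p~(\<cdot>,\<zeta>)\<close>, and in the open disc it is the locally uniform limit
  of the zero-free slices \<open>p(\<cdot>,s\<zeta>)\<close>, \<open>s \<nearrow> 1\<close>, so Hurwitz's theorem applies. Factoring it,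
  \<open>\<phi>\<^sub>\<zeta> = \<gamma> z\<^sup>m\<^sup>-\<^sup>k \<Prod>\<^sub>i\<^sub><\<^sub>k (1 - conj(b\<^sub>i) z)/(z - b\<^sub>i)\<close> with \<open>\<bar>\<gamma>\<bar> = 1\<close> and \<open>\<bar>b\<^sub>i\<bar> > 1\<close>,
  and \<open>\<epsilon>(\<phi>,\<zeta>)\<close> is the least of the numbers \<open>1 - 1/\<bar>b\<^sub>i\<bar>\<close> and, if \<open>k < m\<close>, \<open>1\<close>.

  Each factor has modulus at most \<open>1\<close> on the disc and derivative of modulus
  \<open>P\<^sub>b(z) = (\<bar>b\<bar>\<^sup>2 - 1)/\<bar>z - b\<bar>\<^sup>2\<close>, so \<open>\<bar>\<phi>\<^sub>\<zeta>'\<bar> \<le> \<Sum>\<^sub>i P\<^sub>b\<^sub>i\<close>, with equality on the circle, where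
  all terms of \<open>\<phi>'/\<phi>\<close> have the same argument. Cauchy's formula gives
  \<open>\<integral> P\<^sub>b = 2\<pi>(\<bar>b\<bar>\<^sup>2 - 1)/(\<bar>b\<bar>\<^sup>2 - r\<^sup>2) \<le> 2\<pi>\<close> over the circle of radius \<open>r\<close>, and
  \<open>P\<^sub>b \<le> 2/(1 - 1/\<bar>b\<bar>)\<close>, so \<open>\<integral> P\<^sub>b\<^sup>q\<close> is at most a constant times \<open>(1 - 1/\<bar>b\<bar>)\<^sup>1\<^sup>-\<^sup>q\<close>.
  Conversely \<open>P\<^sub>b \<ge> 1/(2d)\<close> on an arc of length \<open>d = 1 - 1/\<bar>b\<bar>\<close> of the unit circle; this
  lower bound passes to the circles of radius \<open>r < 1\<close> by continuity of the integral in \<open>r\<close>.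
\<close>

section \<open>Blaschke factors\<close>

definition blaschke_factor :: "complex \<Rightarrow> complex \<Rightarrow> complex" where
  "blaschke_factor b z = (1 - cnj b * z) / (z - b)"

definition blaschke_factor_deriv :: "complex \<Rightarrow> complex \<Rightarrow> complex" where
  "blaschke_factor_deriv b z = (of_real (cmod b ^ 2) - 1) / (z - b) ^ 2"

definition blaschke_kernel :: "complex \<Rightarrow> complex \<Rightarrow> real" where
  "blaschke_kernel b z = (cmod b ^ 2 - 1) / cmod (z - b) ^ 2"

lemma has_field_derivative_blaschke_factor:
  assumes "z \<noteq> b"
  shows "(blaschke_factor b has_field_derivative blaschke_factor_deriv b z) (at z)"
proof -
  have "((\<lambda>z. (1 - cnj b * z) / (z - b)) has_field_derivative
     ((- cnj b) * (z - b) - (1 - cnj b * z) * 1) / (z - b)^2) (at z)"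
    using assms by (auto intro!: derivative_eq_intros simp: power2_eq_square)
  moreover have "b * cnj b = (of_real (cmod b))^2"
    by (metis complex_norm_square of_real_power)
  then have "((- cnj b) * (z - b) - (1 - cnj b * z) * 1) / (z - b)^2 = blaschke_factor_deriv b z"
    unfolding blaschke_factor_deriv_def by (simp add: algebra_simps)
  ultimately show ?thesis
    unfolding blaschke_factor_def by simp
qed

lemma norm_blaschke_factor_deriv:
  assumes "cmod b > 1"
  shows "cmod (blaschke_factor_deriv b z) = blaschke_kernel b z"
proof -
  have "(of_real (cmod b ^ 2) - 1 :: complex) = of_real (cmod b ^ 2 - 1)"
    by simp
  moreover have "cmod b ^ 2 > 1"
    using assms by (simp add: one_less_power)
  ultimately have "cmod (of_real (cmod b ^ 2) - 1 :: complex) = cmod b ^ 2 - 1"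
    by (metis abs_of_pos diff_gt_0_iff_gt norm_of_real)
  then show ?thesis
    unfolding blaschke_factor_deriv_def blaschke_kernel_def
    by (simp add: norm_divide norm_power del: of_real_power)
qed

lemma blaschke_factor_norm_identity:
  "cmod (z - b)^2 - cmod (1 - cnj b * z)^2 = (cmod b ^2 - 1) * (1 - cmod z ^2)"
  unfolding cmod_power2 by (simp add: algebra_simps power2_eq_square)

lemma norm_blaschke_factor_le_1:
  assumes "cmod b > 1" "cmod z \<le> 1"
  shows "cmod (blaschke_factor b z) \<le> 1"
proof -
  have "cmod b ^ 2 \<ge> 1" "cmod z ^ 2 \<le> 1"
    using assms by (simp_all add: one_le_power power_le_one)
  then have "cmod (1 - cnj b * z)^2 \<le> cmod (z - b)^2"
    using blaschke_factor_norm_identity[of z b] by (smt (verit) mult_nonneg_nonneg)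
  then have "cmod (1 - cnj b * z) \<le> cmod (z - b)"
    by (rule power2_le_imp_le) simp
  moreover have "z \<noteq> b"
    using assms by auto
  ultimately show ?thesis
    unfolding blaschke_factor_def by (simp add: norm_divide divide_le_eq_1)
qed

lemma norm_blaschke_factor_circle:
  assumes "cmod b > 1" "cmod z = 1"
  shows "cmod (blaschke_factor b z) = 1"
proof -
  have "cmod (1 - cnj b * z)^2 = cmod (z - b)^2"
    using blaschke_factor_norm_identity[of z b] assms by simp
  then have "cmod (1 - cnj b * z) = cmod (z - b)"
    by (simp add: power2_eq_iff_nonneg)
  moreover have "z \<noteq> b"
    using assms by auto
  ultimately show ?thesis
    unfolding blaschke_factor_def by (simp add: norm_divide)
qed

text \<open>On the circle \<open>f'/f = conj(z) P\<^sub>b(z)\<close> with \<open>P\<^sub>b > 0\<close>: all factors turn the same way.\<close>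

lemma blaschke_factor_deriv_circle:
  assumes "cmod b > 1" "cmod z = 1"
  shows "blaschke_factor_deriv b z = blaschke_factor b z * cnj z * of_real (blaschke_kernel b z)"
proof -
  define K where "K = complex_of_real (cmod b ^ 2 - 1)"
  have zb: "z \<noteq> b"
    using assms by auto
  have zz: "z * cnj z = 1"
    using assms by (simp add: complex_mult_cnj cmod_def)
  have "1 - cnj b * z = z * cnj (z - b)"
    using zz by (simp add: algebra_simps)
  moreover have "of_real (cmod (z - b) ^ 2) = (z - b) * cnj (z - b)"
    by (rule complex_norm_square)
  ultimately have "blaschke_factor b z * cnj z * of_real (blaschke_kernel b z)
      = (z * cnj z) * cnj (z - b) * K / ((z - b) * ((z - b) * cnj (z - b)))"
    unfolding blaschke_factor_def blaschke_kernel_def K_def of_real_divide by (simp add: mult_ac)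
  also have "\<dots> = K / (z - b)^2"
    using zz zb by (simp add: power2_eq_square)
  finally show ?thesis
    unfolding blaschke_factor_deriv_def K_def by simp
qed

lemma blaschke_kernel_bounds:
  assumes b: "cmod b > 1" and z: "cmod z \<le> 1"
  shows "0 < blaschke_kernel b z" "blaschke_kernel b z \<le> (cmod b + 1) / (cmod b - 1)"
proof -
  have d: "cmod (z - b) \<ge> cmod b - 1"
    using z norm_triangle_ineq2[of b z] by (simp add: norm_minus_commute)
  have b2: "cmod b ^ 2 > 1"
    using b by (simp add: one_less_power)
  have zb: "cmod (z - b) > 0"
    using d b by linarith
  show "0 < blaschke_kernel b z"
    unfolding blaschke_kernel_def using b2 d b by (intro divide_pos_pos) auto
  have "(cmod b - 1)^2 \<le> cmod (z - b)^2"
    using d b by (intro power_mono) auto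
  then have "blaschke_kernel b z \<le> (cmod b ^ 2 - 1) / (cmod b - 1)^2"
    unfolding blaschke_kernel_def using b2 b zb by (intro divide_left_mono) auto
  also have "\<dots> = ((cmod b + 1) * (cmod b - 1)) / ((cmod b - 1) * (cmod b - 1))"
    by (simp add: algebra_simps power2_eq_square)
  also have "\<dots> = (cmod b + 1) / (cmod b - 1)"
    using b by simp
  finally show "blaschke_kernel b z \<le> (cmod b + 1) / (cmod b - 1)" .
qed

lemma continuous_on_blaschke_kernel_powr:
  assumes b: "cmod b > 1" and r: "0 \<le> r" "r \<le> 1"
  shows "continuous_on S (\<lambda>t. blaschke_kernel b (of_real r * cis t) powr q)"
proof -
  have nz: "of_real r * cis t - b \<noteq> 0" for t
    using b r by (auto simp: norm_mult)
  have pos: "blaschke_kernel b (of_real r * cis t) > 0" for t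
    using blaschke_kernel_bounds(1)[OF b, of "of_real r * cis t"] r by (simp add: norm_mult)
  show ?thesis
    by (rule continuous_on_powr)
      (use pos nz in \<open>auto simp: blaschke_kernel_def intro!: continuous_intros\<close>)
qed

section \<open>Integrals over circles\<close>

lemma continuous_on_Icc_exists_left_of_right_end:
  fixes f :: "real \<Rightarrow> real"
  assumes "continuous_on {a..b} f" "a < b" "y < f b"
  obtains x where "a < x" "x < b" "y < f x"
proof -
  have "\<forall>\<^sub>F x in at_left b. y < f x"
    using continuous_on_Icc_at_leftD[OF assms(1,2)] assms(3) by (rule order_tendstoD)
  moreover have "\<forall>\<^sub>F x in at_left b. x \<in> {a<..<b}"
    using assms(2) by (rule eventually_at_left_real)
  ultimately have "\<forall>\<^sub>F x in at_left b. y < f x \<and> x \<in> {a<..<b}"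
    by eventually_elim auto
  then show ?thesis
    using eventually_happens'[of "at_left b"] that by force
qed

lemma powr_sum_le_card_powr_mult_sum_powr:
  fixes x :: "'a \<Rightarrow> real"
  assumes fin: "finite I" and x0: "\<And>i. i \<in> I \<Longrightarrow> x i \<ge> 0" and q: "q > 0"
  shows "(\<Sum>i\<in>I. x i) powr q \<le> real (card I) powr q * (\<Sum>i\<in>I. x i powr q)"
proof (cases "I = {}")
  case False
  define M where "M = Max (x ` I)"
  have "M \<in> x ` I"
    unfolding M_def using fin False by (intro Max_in) auto
  then obtain i0 where i0: "i0 \<in> I" "M = x i0"
    by auto
  have "(\<Sum>i\<in>I. x i) \<le> (\<Sum>i\<in>I. M)"
    unfolding M_def using fin by (intro sum_mono Max_ge) auto
  then have "(\<Sum>i\<in>I. x i) powr q \<le> (real (card I) * M) powr q"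
    using q x0 by (intro powr_mono2) (auto intro: sum_nonneg)
  also have "\<dots> = real (card I) powr q * M powr q"
    using i0 x0 by (simp add: powr_mult)
  also have "M powr q \<le> (\<Sum>i\<in>I. x i powr q)"
    unfolding i0(2) using fin i0(1) by (intro member_le_sum) auto
  finally show ?thesis
    by (simp add: mult_left_mono)
qed simp

lemma continuous_on_circle_integral_norm_powr:
  assumes f: "continuous_on (cball 0 1) f" and q: "q > 0"
  shows "continuous_on {0..1} (\<lambda>r. integral {0..2*pi} (\<lambda>t. cmod (f (of_real r * cis t)) powr q))"
proof -
  have "continuous_on ({0..1} \<times> {0..2*pi}) (\<lambda>p. cmod (f (of_real (fst p) * cis (snd p))) powr q)"
    using q
    by (intro continuous_on_powr' continuous_on_norm continuous_on_compose2[OF f]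
        continuous_intros) (auto simp: norm_mult)
  then have "continuous_on {0..1}
      (\<lambda>r. integral (cbox 0 (2*pi)) (\<lambda>t. cmod (f (of_real r * cis t)) powr q))"
    by (intro integral_continuous_on_param) (simp add: case_prod_beta' cbox_interval)
  then show ?thesis
    by (simp add: cbox_interval)
qed

lemma integrable_circle_norm_powr:
  assumes f: "continuous_on (cball 0 1) f" and q: "q > 0" and r: "0 \<le> r" "r \<le> 1"
  shows "(\<lambda>t. cmod (f (of_real r * cis t)) powr q) integrable_on {0..2*pi}"
  using q r
  by (intro integrable_continuous_interval continuous_on_powr' continuous_on_norm
      continuous_on_compose2[OF f] continuous_intros) (auto simp: norm_mult)

text \<open>On \<open>\<bar>z\<bar> = r\<close> the function \<open>1/\<bar>z - b\<bar>\<^sup>2\<close> is rational in \<open>z\<close>, with a pole at the reflection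
  \<open>r\<^sup>2/conj(b)\<close> of \<open>b\<close>; this makes its circle integral computable by Cauchy's formula.\<close>

lemma inverse_norm_diff_sq_circle:
  assumes z: "cmod z = r" and r: "0 < r" and b: "r < cmod b"
  shows "of_real (1 / cmod (z - b) ^ 2)
    = - z / (cnj b * (z - complex_of_real (r^2) / cnj b) * (z - b))"
proof -
  have zz: "z * cnj z = of_real (r^2)"
    using complex_norm_square[of z] z by simp
  have "z \<noteq> 0" "cnj b \<noteq> 0"
    using z r b by auto
  then have "cnj b * (z - complex_of_real (r^2) / cnj b) = - z * cnj (z - b)"
    using zz by (simp add: field_simps)
  then have "- z / (cnj b * (z - complex_of_real (r^2) / cnj b) * (z - b))
      = z / (z * ((z - b) * cnj (z - b)))"
    by (simp add: mult_ac)
  also have "\<dots> = 1 / ((z - b) * cnj (z - b))"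
    using \<open>z \<noteq> 0\<close> by simp
  also have "\<dots> = of_real (1 / cmod (z - b) ^ 2)"
    unfolding of_real_divide complex_norm_square by simp
  finally show ?thesis ..
qed

lemma has_integral_inverse_norm_diff_sq_circle:
  assumes b: "cmod b > 1" and r: "0 < r" "r < 1"
  shows "((\<lambda>t. 1 / cmod (of_real r * cis t - b) ^ 2) has_integral 2 * pi / (cmod b ^ 2 - r ^ 2))
    {0..2*pi}"
proof -
  have b0: "b \<noteq> 0" "cnj b \<noteq> 0"
    using b by auto
  define h where "h u = - 1 / (cnj b * (u - b))" for u
  define w where "w = complex_of_real (r^2) / cnj b"
  have nb: "u \<noteq> b" if "cmod u \<le> r" for u
    using that b r by auto
  have "continuous_on (cball 0 r) h" "h holomorphic_on (ball 0 r)"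
    unfolding h_def using nb b0 by (auto intro!: continuous_intros holomorphic_intros)
  moreover have "r^2 / cmod b < r"
    using r b by (simp add: divide_less_eq power2_eq_square)
  then have wr: "norm (w - 0) < r"
    unfolding w_def by (simp add: norm_divide norm_power)
  ultimately have "((\<lambda>u. h u / (u - w)) has_contour_integral (2 * of_real pi * \<i> * h w))
      (circlepath 0 r)"
    by (rule Cauchy_integral_circlepath)
  then have "((\<lambda>t. h (r * cis t) / (r * cis t - w) * r * \<i> * cis t)
      has_integral (2 * of_real pi * \<i> * h w)) {0..2*pi}"
    unfolding circlepath_def by (subst (asm) has_contour_integral_part_circlepath_iff) auto
  then have "((\<lambda>t. (- \<i>) * (h (r * cis t) / (r * cis t - w) * r * \<i> * cis t))
      has_integral (- \<i>) * (2 * of_real pi * \<i> * h w)) {0..2*pi}"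
    by (intro has_integral_mult_right)
  moreover have "(- \<i>) * (h (r * cis t) / (r * cis t - w) * r * \<i> * cis t)
      = of_real (1 / cmod (of_real r * cis t - b) ^ 2)" for t
  proof -
    define z where "z = complex_of_real r * cis t"
    have cz: "cmod z = r"
      unfolding z_def using r by (simp add: norm_mult)
    then have zb: "z \<noteq> b" and zw: "z \<noteq> w"
      using nb wr by auto
    have "(- \<i>) * (h z / (z - w) * r * \<i> * cis t) = - z / (cnj b * (z - w) * (z - b))"
      unfolding h_def z_def using zw zb b0 by (simp add: field_simps)
    also have "\<dots> = of_real (1 / cmod (z - b) ^ 2)"
      unfolding w_def using inverse_norm_diff_sq_circle[OF cz] r b by simp
    finally show ?thesis
      unfolding z_def .
  qed
  moreover have "(- \<i>) * (2 * of_real pi * \<i> * h w) = of_real (2 * pi / (cmod b ^ 2 - r ^ 2))"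
  proof -
    have bb: "cnj b * b = of_real (cmod b ^ 2)"
      by (metis complex_norm_square mult.commute)
    have "r ^ 2 < cmod b ^ 2"
      using b r by (intro power_strict_mono) auto
    then have ne: "complex_of_real (r^2) - of_real (cmod b ^ 2) \<noteq> 0"
      by (simp del: of_real_power)
    have "h w = - 1 / (of_real (r^2) - cnj b * b)"
      unfolding h_def w_def using b0 by (simp add: right_diff_distrib)
    also have "\<dots> = of_real (1 / (cmod b ^ 2 - r^2))"
      unfolding bb using ne by (simp add: field_simps del: of_real_power)
    finally show ?thesis
      by (simp add: algebra_simps)
  qed
  ultimately have "((\<lambda>t. complex_of_real (1 / cmod (of_real r * cis t - b) ^ 2)) has_integral
      complex_of_real (2 * pi / (cmod b ^ 2 - r ^ 2))) {0..2*pi}"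
    by simp
  from has_integral_linear[OF this bounded_linear_Re] show ?thesis
    by (simp add: o_def)
qed

lemma has_integral_blaschke_kernel_circle:
  assumes b: "cmod b > 1" and r: "0 < r" "r < 1"
  shows "((\<lambda>t. blaschke_kernel b (of_real r * cis t)) has_integral
      (cmod b ^ 2 - 1) * (2 * pi / (cmod b ^ 2 - r ^ 2))) {0..2*pi}"
  using has_integral_mult_right[OF has_integral_inverse_norm_diff_sq_circle[OF b r]]
  by (simp add: blaschke_kernel_def)

lemma powr_le_powr_pred_mult:
  fixes x K q :: real
  assumes "0 < x" "x \<le> K" "q \<ge> 1"
  shows "x powr q \<le> K powr (q - 1) * x"
proof -
  have "x powr q = x powr (q - 1) * x"
    using assms powr_add[of x "q - 1" 1] by simp
  also have "\<dots> \<le> K powr (q - 1) * x"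
    using assms by (intro mult_right_mono powr_mono2) auto
  finally show ?thesis .
qed

lemma integral_blaschke_kernel_powr_le:
  assumes b: "cmod b > 1" and r: "0 < r" "r < 1" and q: "q \<ge> 1"
  shows "integral {0..2*pi} (\<lambda>t. blaschke_kernel b (of_real r * cis t) powr q)
     \<le> 2 * pi * (2 powr (q - 1) * (1 - 1 / cmod b) powr (1 - q))"
proof -
  define K where "K = (cmod b + 1) / (cmod b - 1)"
  define d where "d = 1 - 1 / cmod b"
  note int = has_integral_blaschke_kernel_circle[OF b r]
  have d0: "d > 0"
    unfolding d_def using b by (simp add: divide_less_eq)
  have "2 / d = 2 * cmod b / (cmod b - 1)"
    unfolding d_def using b by (auto simp: field_simps)
  then have K0: "K > 0" and Kd: "K \<le> 2 / d"
    unfolding K_def using b by (simp_all add: divide_right_mono)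
  have cz: "cmod (of_real r * cis t) \<le> 1" for t
    using r by (simp add: norm_mult)
  have "integral {0..2*pi} (\<lambda>t. blaschke_kernel b (of_real r * cis t) powr q)
      \<le> integral {0..2*pi} (\<lambda>t. K powr (q - 1) * blaschke_kernel b (of_real r * cis t))"
  proof (rule integral_le)
    show "(\<lambda>t. blaschke_kernel b (of_real r * cis t) powr q) integrable_on {0..2*pi}"
      using r by (intro integrable_continuous_interval continuous_on_blaschke_kernel_powr b) auto
    show "(\<lambda>t. K powr (q - 1) * blaschke_kernel b (of_real r * cis t)) integrable_on {0..2*pi}"
      using has_integral_mult_right[OF int] by (rule has_integral_integrable)
    show "blaschke_kernel b (of_real r * cis t) powr q
        \<le> K powr (q - 1) * blaschke_kernel b (of_real r * cis t)" for t
      using blaschke_kernel_bounds[OF b cz] q unfolding K_def by (intro powr_le_powr_pred_mult)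
  qed
  also have "\<dots> = K powr (q - 1) * ((cmod b ^ 2 - 1) * (2 * pi / (cmod b ^ 2 - r ^ 2)))"
    using has_integral_mult_right[OF int] by (rule integral_unique)
  also have "\<dots> = K powr (q - 1) * (2 * pi * ((cmod b ^ 2 - 1) / (cmod b ^ 2 - r ^ 2)))"
    by simp
  also have "\<dots> \<le> K powr (q - 1) * (2 * pi)"
  proof -
    have "r^2 < 1" "cmod b ^ 2 > 1"
      using r b power_strict_mono[of r 1 2] by (simp_all add: one_less_power)
    then have "(cmod b ^ 2 - 1) / (cmod b ^ 2 - r ^ 2) \<le> 1"
      by simp
    then show ?thesis
      by (intro mult_left_mono mult_left_le) auto
  qed
  also have "\<dots> \<le> (2 / d) powr (q - 1) * (2 * pi)"
    using K0 Kd q by (intro mult_right_mono powr_mono2) auto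
  also have "\<dots> = 2 * pi * (2 powr (q - 1) * d powr (1 - q))"
    using d0 powr_minus[of d "q - 1"] by (simp add: powr_divide divide_inverse powr_mult inverse_powr)
  finally show ?thesis
    unfolding d_def .
qed

lemma cos_ge_1_minus_sq_div_2: "cos (x::real) \<ge> 1 - x^2 / 2"
proof -
  have "\<bar>sin (x/2)\<bar> ^ 2 \<le> \<bar>x/2\<bar> ^ 2"
    by (intro power_mono abs_sin_x_le_abs_x) auto
  then have "sin (x/2) ^ 2 \<le> (x/2) ^ 2"
    by (simp only: power2_abs)
  then show ?thesis
    using cos_double_sin[of "x/2"] by (simp add: power2_eq_square)
qed

lemma norm_cis_minus_rcis_sq:
  "cmod (cis t - of_real \<rho> * cis \<theta>) ^ 2 = 1 + \<rho>^2 - 2 * \<rho> * cos (t - \<theta>)"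
proof -
  have "sin t ^ 2 + cos t ^ 2 = 1" "sin \<theta> ^ 2 + cos \<theta> ^ 2 = 1"
    by simp_all
  then have "(cos t - \<rho> * cos \<theta>) ^ 2 + (sin t - \<rho> * sin \<theta>) ^ 2
      = 1 + \<rho>^2 - 2 * \<rho> * (cos t * cos \<theta> + sin t * sin \<theta>)"
    by algebra
  then show ?thesis
    unfolding cmod_power2 cos_diff by simp
qed

lemma blaschke_kernel_ge_near_pole:
  assumes \<rho>: "\<rho> > 1" and t: "\<bar>t - \<theta>\<bar> \<le> 1 - 1 / \<rho>"
  shows "blaschke_kernel (of_real \<rho> * cis \<theta>) (cis t) \<ge> 1 / (2 * (1 - 1 / \<rho>))"
proof -
  define d where "d = 1 - 1 / \<rho>"
  have d: "d = (\<rho> - 1) / \<rho>"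
    unfolding d_def using \<rho> by (simp add: field_simps)
  have "(t - \<theta>)^2 \<le> d^2"
    using t unfolding d_def by (metis abs_ge_zero order_trans power2_abs power_mono)
  then have cos: "cos (t - \<theta>) \<ge> 1 - d^2 / 2"
    using cos_ge_1_minus_sq_div_2[of "t - \<theta>"] by linarith
  have "cmod (cis t - of_real \<rho> * cis \<theta>) ^ 2 \<le> 1 + \<rho>^2 - 2 * \<rho> * (1 - d^2 / 2)"
    unfolding norm_cis_minus_rcis_sq using cos \<rho> by (simp add: mult_left_mono)
  also have "\<dots> = (\<rho> - 1)^2 + (\<rho> - 1)^2 / \<rho>"
    unfolding d using \<rho> by (simp add: field_simps power2_eq_square)
  also have "\<dots> \<le> 2 * (\<rho> - 1)^2"
    using \<rho> by (simp add: divide_le_eq)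
  finally have le: "cmod (cis t - of_real \<rho> * cis \<theta>) ^ 2 \<le> 2 * (\<rho> - 1)^2" .
  have "cmod (of_real \<rho> * cis \<theta>) = \<rho>"
    using \<rho> by (simp add: norm_mult)
  then have "cis t - of_real \<rho> * cis \<theta> \<noteq> 0"
    using \<rho> by (metis eq_iff_diff_eq_0 less_irrefl norm_cis)
  then have pos: "cmod (cis t - of_real \<rho> * cis \<theta>) ^ 2 > 0"
    by simp
  have "(\<rho>^2 - 1) / (2 * (\<rho> - 1)^2) = ((\<rho> + 1) * (\<rho> - 1)) / ((2 * (\<rho> - 1)) * (\<rho> - 1))"
    by (simp add: power2_eq_square algebra_simps)
  then have "(\<rho>^2 - 1) / (2 * (\<rho> - 1)^2) = (\<rho> + 1) / (2 * (\<rho> - 1))"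
    using \<rho> by simp
  moreover have "1 / (2 * d) = \<rho> / (2 * (\<rho> - 1))"
    unfolding d using \<rho> by simp
  ultimately have "1 / (2 * d) \<le> (\<rho>^2 - 1) / (2 * (\<rho> - 1)^2)"
    using \<rho> by (simp add: divide_right_mono)
  also have "\<dots> \<le> (\<rho>^2 - 1) / cmod (cis t - of_real \<rho> * cis \<theta>) ^ 2"
    using le pos \<rho> by (intro divide_left_mono) (auto simp: one_less_power)
  finally show ?thesis
    unfolding blaschke_kernel_def d_def using \<rho> by (simp add: norm_mult)
qed

lemma arc_near_angle:
  assumes "0 \<le> \<theta>" "\<theta> \<le> 2 * pi" "0 < d" "d \<le> pi"
  obtains a where "{a..a+d} \<subseteq> {0..2*pi}" "\<And>t. t \<in> {a..a+d} \<Longrightarrow> \<bar>t - \<theta>\<bar> \<le> d"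
proof (cases "\<theta> \<le> pi")
  case True
  show ?thesis
    by (rule that[of \<theta>]) (use True assms in auto)
next
  case False
  show ?thesis
    by (rule that[of "\<theta> - d"]) (use False assms in auto)
qed

lemma polar_form_angle_in_0_2pi:
  obtains \<theta> where "0 \<le> \<theta>" "\<theta> \<le> 2 * pi" "b = of_real (cmod b) * cis \<theta>"
proof
  define \<theta> where "\<theta> = (if Arg b \<ge> 0 then Arg b else Arg b + 2 * pi)"
  show "0 \<le> \<theta>" "\<theta> \<le> 2 * pi"
    unfolding \<theta>_def using Arg_bounded[of b] by auto
  have "b = rcis (cmod b) (Arg b)"
    by (simp add: rcis_cmod_Arg)
  also have "\<dots> = of_real (cmod b) * cis \<theta>"
    unfolding \<theta>_def rcis_def by (auto simp: cis_def complex_eq_iff)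
  finally show "b = of_real (cmod b) * cis \<theta>" .
qed

lemma mult_powr_inverse_double:
  fixes d q :: real
  assumes "0 < d"
  shows "d * (1 / (2 * d)) powr q = 2 powr (- q) * d powr (1 - q)"
proof -
  have "(1 / (2 * d)) powr q = inverse (2 powr q) * inverse (d powr q)"
    using assms by (simp only: divide_inverse mult_1 inverse_powr powr_mult inverse_mult_distrib
        order.strict_implies_order zero_le_numeral mult.commute)
  also have "\<dots> = 2 powr (- q) * d powr (- q)"
    by (simp only: powr_minus)
  finally have "d * (1 / (2 * d)) powr q = 2 powr (- q) * (d powr 1 * d powr (- q))"
    using assms by (simp only: mult_ac) simp
  also have "d powr 1 * d powr (- q) = d powr (1 - q)"
    by (simp only: powr_add[symmetric] diff_conv_add_uminus)
  finally show ?thesis .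
qed

lemma integral_blaschke_kernel_powr_ge:
  assumes b: "cmod b > 1" and q: "q \<ge> 1"
  shows "integral {0..2*pi} (\<lambda>t. blaschke_kernel b (cis t) powr q)
    \<ge> 2 powr (- q) * (1 - 1 / cmod b) powr (1 - q)"
proof -
  define d where "d = 1 - 1 / cmod b"
  have "0 < d" "d < 1"
    unfolding d_def using b by (auto simp: divide_less_eq)
  then have d0: "0 < d" "d \<le> pi"
    using pi_gt3 by auto
  obtain \<theta> where "0 \<le> \<theta>" "\<theta> \<le> 2 * pi" and b\<theta>: "b = of_real (cmod b) * cis \<theta>"
    by (rule polar_form_angle_in_0_2pi)
  then obtain a where sub: "{a..a+d} \<subseteq> {0..2*pi}" and near: "\<And>t. t \<in> {a..a+d} \<Longrightarrow> \<bar>t - \<theta>\<bar> \<le> d"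
    using arc_near_angle d0 by blast
  have cont: "continuous_on S (\<lambda>t. blaschke_kernel b (cis t) powr q)" for S
    using continuous_on_blaschke_kernel_powr[OF b, of 1 S q] by simp
  have "integral {a..a+d} (\<lambda>t. (1 / (2 * d)) powr q)
      \<le> integral {a..a+d} (\<lambda>t. blaschke_kernel b (cis t) powr q)"
  proof (rule integral_le)
    show "(\<lambda>t. blaschke_kernel b (cis t) powr q) integrable_on {a..a+d}"
      by (rule integrable_continuous_interval[OF cont])
    show "(1 / (2 * d)) powr q \<le> blaschke_kernel b (cis t) powr q" if "t \<in> {a..a+d}" for t
    proof -
      have "1 / (2 * d) \<le> blaschke_kernel b (cis t)"
        using blaschke_kernel_ge_near_pole[of "cmod b" t \<theta>] near[OF that] b
        unfolding d_def b\<theta>[symmetric] by simp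
      then show ?thesis
        using d0 q by (intro powr_mono2) auto
    qed
  qed auto
  also have "\<dots> \<le> integral {0..2*pi} (\<lambda>t. blaschke_kernel b (cis t) powr q)"
    by (rule integral_subset_le[OF sub]) (auto intro: integrable_continuous_interval[OF cont])
  finally have "d * (1 / (2 * d)) powr q \<le> integral {0..2*pi} (\<lambda>t. blaschke_kernel b (cis t) powr q)"
    using d0 by simp
  moreover have "d * (1 / (2 * d)) powr q = 2 powr (- q) * d powr (1 - q)"
    using d0(1) by (rule mult_powr_inverse_double)
  ultimately show ?thesis
    unfolding d_def by linarith
qed

section \<open>Finite Blaschke products\<close>

text \<open>
  A Blaschke product of degree \<open>m\<close> whose first \<open>k\<close> factors have poles \<open>b i\<close> and whose
  remaining factors are \<open>z\<close> (pole at infinity). The zero of the \<open>i\<close>-th factor has modulus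
  \<open>1 - blaschke_zero_gap k b i\<close>.
\<close>

definition blaschke_term :: "nat \<Rightarrow> (nat \<Rightarrow> complex) \<Rightarrow> nat \<Rightarrow> complex \<Rightarrow> complex" where
  "blaschke_term k b i z = (if i < k then blaschke_factor (b i) z else z)"

definition blaschke_term_deriv :: "nat \<Rightarrow> (nat \<Rightarrow> complex) \<Rightarrow> nat \<Rightarrow> complex \<Rightarrow> complex" where
  "blaschke_term_deriv k b i z = (if i < k then blaschke_factor_deriv (b i) z else 1)"

definition blaschke_weight :: "nat \<Rightarrow> (nat \<Rightarrow> complex) \<Rightarrow> nat \<Rightarrow> complex \<Rightarrow> real" where
  "blaschke_weight k b i z = (if i < k then blaschke_kernel (b i) z else 1)"

definition blaschke_zero_gap :: "nat \<Rightarrow> (nat \<Rightarrow> complex) \<Rightarrow> nat \<Rightarrow> real" where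
  "blaschke_zero_gap k b i = (if i < k then 1 - 1 / cmod (b i) else 1)"

definition blaschke_prod :: "complex \<Rightarrow> nat \<Rightarrow> nat \<Rightarrow> (nat \<Rightarrow> complex) \<Rightarrow> complex \<Rightarrow> complex" where
  "blaschke_prod \<gamma> m k b z = \<gamma> * (\<Prod>i<m. blaschke_term k b i z)"

definition blaschke_prod_deriv ::
    "complex \<Rightarrow> nat \<Rightarrow> nat \<Rightarrow> (nat \<Rightarrow> complex) \<Rightarrow> complex \<Rightarrow> complex" where
  "blaschke_prod_deriv \<gamma> m k b z =
     \<gamma> * (\<Sum>i<m. blaschke_term_deriv k b i z * (\<Prod>j\<in>{..<m}-{i}. blaschke_term k b j z))"

lemma blaschke_zero_gap_pos:
  assumes "\<forall>i<k. cmod (b i) > 1"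
  shows "0 < blaschke_zero_gap k b i"
  using assms unfolding blaschke_zero_gap_def by (simp add: divide_less_eq)

lemma prod_blaschke_term:
  assumes "k \<le> m"
  shows "(\<Prod>i<m. blaschke_term k b i w) = (\<Prod>i<k. blaschke_factor (b i) w) * w ^ (m - k)"
proof -
  have "(\<Prod>i<m. blaschke_term k b i w)
      = (\<Prod>i\<in>{..<m} \<inter> {i. i < k}. blaschke_factor (b i) w) * (\<Prod>i\<in>{..<m} \<inter> - {i. i < k}. w)"
    unfolding blaschke_term_def by (rule prod.If_cases) simp
  also have "{..<m} \<inter> {i. i < k} = {..<k}"
    using assms by auto
  also have "{..<m} \<inter> - {i. i < k} = {k..<m}"
    by auto
  finally show ?thesis
    by simp
qed

lemma has_field_derivative_blaschke_term:
  assumes "\<forall>i<k. z \<noteq> b i"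
  shows "(blaschke_term k b i has_field_derivative blaschke_term_deriv k b i z) (at z)"
proof (cases "i < k")
  case True
  then show ?thesis
    using assms has_field_derivative_blaschke_factor[of z "b i"]
    unfolding blaschke_term_def blaschke_term_deriv_def by (simp add: fun_eq_iff)
next
  case False
  then have "blaschke_term k b i = (\<lambda>z. z)"
    by (simp add: blaschke_term_def fun_eq_iff)
  with False show ?thesis
    by (simp add: blaschke_term_deriv_def)
qed

lemma has_field_derivative_blaschke_prod:
  assumes "\<forall>i<k. z \<noteq> b i"
  shows "(blaschke_prod \<gamma> m k b has_field_derivative blaschke_prod_deriv \<gamma> m k b z) (at z)"
  unfolding blaschke_prod_def[abs_def] blaschke_prod_deriv_def
  by (intro DERIV_cmult has_field_derivative_prod has_field_derivative_blaschke_term assms)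

lemma continuous_on_blaschke_prod_deriv:
  assumes "\<forall>i<k. cmod (b i) > 1"
  shows "continuous_on (cball 0 1) (blaschke_prod_deriv \<gamma> m k b)"
proof -
  have nz: "z - b i \<noteq> 0" if "z \<in> cball 0 1" "i < k" for z i
    using assms that by force
  have "continuous_on (cball 0 1) (blaschke_term k b i)"
    "continuous_on (cball 0 1) (blaschke_term_deriv k b i)" for i
    unfolding blaschke_term_def[abs_def] blaschke_term_deriv_def[abs_def]
      blaschke_factor_def blaschke_factor_deriv_def
    using nz by (cases "i < k"; auto intro!: continuous_intros)+
  then show ?thesis
    unfolding blaschke_prod_deriv_def[abs_def] by (intro continuous_intros) auto
qed

lemma blaschke_weight_nonneg:
  assumes "\<forall>i<k. cmod (b i) > 1" "cmod z \<le> 1"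
  shows "blaschke_weight k b i z \<ge> 0"
  using assms blaschke_kernel_bounds(1)[of "b i" z] unfolding blaschke_weight_def by auto

lemma norm_blaschke_prod_deriv_le:
  assumes \<gamma>: "cmod \<gamma> = 1" and b: "\<forall>i<k. cmod (b i) > 1" and z: "cmod z \<le> 1"
  shows "cmod (blaschke_prod_deriv \<gamma> m k b z) \<le> (\<Sum>i<m. blaschke_weight k b i z)"
proof -
  have "cmod (blaschke_prod_deriv \<gamma> m k b z)
      \<le> (\<Sum>i<m. cmod (blaschke_term_deriv k b i z * (\<Prod>j\<in>{..<m}-{i}. blaschke_term k b j z)))"
    unfolding blaschke_prod_deriv_def norm_mult[of \<gamma>] \<gamma> mult_1 by (rule norm_sum)
  also have "\<dots> \<le> (\<Sum>i<m. blaschke_weight k b i z)"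
  proof (rule sum_mono)
    fix i
    have "cmod (blaschke_term k b j z) \<le> 1" for j
      using b z norm_blaschke_factor_le_1 unfolding blaschke_term_def by auto
    then have "cmod (\<Prod>j\<in>{..<m}-{i}. blaschke_term k b j z) \<le> 1"
      unfolding prod_norm[symmetric] by (intro prod_le_1) auto
    moreover have "cmod (blaschke_term_deriv k b i z) = blaschke_weight k b i z"
      using b norm_blaschke_factor_deriv
      unfolding blaschke_term_deriv_def blaschke_weight_def by auto
    ultimately show "cmod (blaschke_term_deriv k b i z * (\<Prod>j\<in>{..<m}-{i}. blaschke_term k b j z))
        \<le> blaschke_weight k b i z"
      using blaschke_weight_nonneg[OF b z] by (simp add: norm_mult mult_left_le)
  qed
  finally show ?thesis .
qed

text \<open>On the circle \<open>B'/B = conj(z) \<Sum>\<^sub>i w\<^sub>i(z)\<close>; compare the two formulas for \<open>B'\<close>.\<close>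

lemma norm_blaschke_prod_deriv_circle:
  assumes \<gamma>: "cmod \<gamma> = 1" and b: "\<forall>i<k. cmod (b i) > 1" and z: "cmod z = 1"
  shows "cmod (blaschke_prod_deriv \<gamma> m k b z) = (\<Sum>i<m. blaschke_weight k b i z)"
proof -
  have zb: "\<forall>i<k. z \<noteq> b i"
    using b z by auto
  have zz: "z * cnj z = 1"
    using z by (simp add: complex_mult_cnj cmod_def)
  have norm1: "cmod (blaschke_term k b i z) = 1" for i
    using b z norm_blaschke_factor_circle[of "b i" z] unfolding blaschke_term_def by auto
  then have nz: "blaschke_term k b i z \<noteq> 0" for i
    by (metis norm_zero zero_neq_one)
  have quot: "blaschke_term_deriv k b i z / blaschke_term k b i z
      = cnj z * of_real (blaschke_weight k b i z)" for i
    using blaschke_factor_deriv_circle[of "b i" z] b z nz[of i] zz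
    unfolding blaschke_term_deriv_def blaschke_term_def blaschke_weight_def
    by (auto simp: field_simps)
  have "((\<lambda>u. \<Prod>i<m. blaschke_term k b i u) has_field_derivative
      (\<Prod>i<m. blaschke_term k b i z) * (\<Sum>i<m. blaschke_term_deriv k b i z / blaschke_term k b i z))
      (at z)"
    using nz has_field_derivative_blaschke_term[OF zb] by (intro has_field_derivative_prod') auto
  moreover have "((\<lambda>u. \<Prod>i<m. blaschke_term k b i u) has_field_derivative
      (\<Sum>i<m. blaschke_term_deriv k b i z * (\<Prod>j\<in>{..<m}-{i}. blaschke_term k b j z))) (at z)"
    by (intro has_field_derivative_prod has_field_derivative_blaschke_term zb)
  ultimately have eq: "(\<Sum>i<m. blaschke_term_deriv k b i z * (\<Prod>j\<in>{..<m}-{i}. blaschke_term k b j z))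
      = (\<Prod>i<m. blaschke_term k b i z) * (cnj z * of_real (\<Sum>i<m. blaschke_weight k b i z))"
    using DERIV_unique quot by (simp add: sum_distrib_left)
  have "cmod (\<Prod>i<m. blaschke_term k b i z) = 1"
    unfolding prod_norm[symmetric] using norm1 by simp
  moreover have "(\<Sum>i<m. blaschke_weight k b i z) \<ge> 0"
    using blaschke_weight_nonneg b z by (intro sum_nonneg) auto
  ultimately show ?thesis
    unfolding blaschke_prod_deriv_def eq using \<gamma> z by (simp add: norm_mult flip: of_real_sum)
qed

lemma continuous_on_blaschke_weight_powr:
  assumes "\<forall>i<k. cmod (b i) > 1" "0 \<le> r" "r \<le> 1"
  shows "continuous_on S (\<lambda>t. blaschke_weight k b i (of_real r * cis t) powr q)"
  using assms continuous_on_blaschke_kernel_powr[of "b i" r S q]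
  unfolding blaschke_weight_def by (cases "i < k") auto

lemma integral_blaschke_weight_powr_le:
  assumes "\<forall>i<k. cmod (b i) > 1" "0 < r" "r < 1" "q \<ge> 1"
  shows "integral {0..2*pi} (\<lambda>t. blaschke_weight k b i (of_real r * cis t) powr q)
    \<le> 2 * pi * (2 powr (q - 1) * blaschke_zero_gap k b i powr (1 - q))"
proof (cases "i < k")
  case True
  then show ?thesis
    using assms integral_blaschke_kernel_powr_le[of "b i" r q]
    unfolding blaschke_weight_def blaschke_zero_gap_def by simp
next
  case False
  have "1 \<le> 2 powr (q - 1)"
    using assms by (intro ge_one_powr_ge_zero) auto
  with False show ?thesis
    unfolding blaschke_weight_def blaschke_zero_gap_def by simp
qed

lemma integral_blaschke_weight_powr_ge:
  assumes "\<forall>i<k. cmod (b i) > 1" "q \<ge> 1"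
  shows "integral {0..2*pi} (\<lambda>t. blaschke_weight k b i (cis t) powr q)
    \<ge> 2 powr (- q) * blaschke_zero_gap k b i powr (1 - q)"
proof (cases "i < k")
  case True
  then show ?thesis
    using assms integral_blaschke_kernel_powr_ge[of "b i" q]
    unfolding blaschke_weight_def blaschke_zero_gap_def by simp
next
  case False
  have "2 powr (- q) \<le> 1"
    using assms by (simp add: powr_minus inverse_le_1_iff ge_one_powr_ge_zero)
  also have "1 \<le> 2 * pi"
    using pi_gt3 by simp
  finally show ?thesis
    using False unfolding blaschke_weight_def blaschke_zero_gap_def by simp
qed

lemma integral_blaschke_prod_deriv_powr_le:
  assumes \<gamma>: "cmod \<gamma> = 1" and b: "\<forall>i<k. cmod (b i) > 1" and r: "0 < r" "r < 1" and q: "q \<ge> 1"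
  shows "integral {0..2*pi} (\<lambda>t. cmod (blaschke_prod_deriv \<gamma> m k b (of_real r * cis t)) powr q)
    \<le> real m powr q * (\<Sum>i<m. 2 * pi * (2 powr (q - 1) * blaschke_zero_gap k b i powr (1 - q)))"
proof -
  have z: "cmod (of_real r * cis t) \<le> 1" for t
    using r by (simp add: norm_mult)
  have int_weight: "(\<lambda>t. blaschke_weight k b i (of_real r * cis t) powr q) integrable_on {0..2*pi}"
    for i
    using b r by (intro integrable_continuous_interval continuous_on_blaschke_weight_powr) auto
  have "integral {0..2*pi} (\<lambda>t. cmod (blaschke_prod_deriv \<gamma> m k b (of_real r * cis t)) powr q)
     \<le> integral {0..2*pi} (\<lambda>t. real m powr q * (\<Sum>i<m. blaschke_weight k b i (of_real r * cis t) powr q))"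
  proof (rule integral_le)
    show "(\<lambda>t. cmod (blaschke_prod_deriv \<gamma> m k b (of_real r * cis t)) powr q) integrable_on {0..2*pi}"
      using q r by (intro integrable_circle_norm_powr continuous_on_blaschke_prod_deriv b) auto
    show "(\<lambda>t. real m powr q * (\<Sum>i<m. blaschke_weight k b i (of_real r * cis t) powr q))
        integrable_on {0..2*pi}"
      using integrable_on_cmult_left[OF integrable_sum[of "{..<m}", OF _ int_weight]] by simp
    fix t
    have "cmod (blaschke_prod_deriv \<gamma> m k b (of_real r * cis t)) powr q
        \<le> (\<Sum>i<m. blaschke_weight k b i (of_real r * cis t)) powr q"
      using norm_blaschke_prod_deriv_le[OF \<gamma> b z] q by (intro powr_mono2) auto
    also have "\<dots> \<le> real m powr q * (\<Sum>i<m. blaschke_weight k b i (of_real r * cis t) powr q)"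
      using powr_sum_le_card_powr_mult_sum_powr[of "{..<m}"] blaschke_weight_nonneg[OF b z] q
      by simp
    finally show "cmod (blaschke_prod_deriv \<gamma> m k b (of_real r * cis t)) powr q
        \<le> real m powr q * (\<Sum>i<m. blaschke_weight k b i (of_real r * cis t) powr q)" .
  qed
  also have "\<dots> = real m powr q * (\<Sum>i<m. integral {0..2*pi}
      (\<lambda>t. blaschke_weight k b i (of_real r * cis t) powr q))"
    by (simp add: integral_sum int_weight)
  also have "\<dots> \<le> real m powr q * (\<Sum>i<m. 2 * pi * (2 powr (q - 1) * blaschke_zero_gap k b i powr (1 - q)))"
    using b r q by (intro mult_left_mono sum_mono integral_blaschke_weight_powr_le) auto
  finally show ?thesis .
qed

lemma integral_blaschke_prod_deriv_powr_ge:
  assumes \<gamma>: "cmod \<gamma> = 1" and b: "\<forall>i<k. cmod (b i) > 1" and q: "q \<ge> 1" and i: "i < m"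
  shows "integral {0..2*pi} (\<lambda>t. cmod (blaschke_prod_deriv \<gamma> m k b (cis t)) powr q)
    \<ge> 2 powr (- q) * blaschke_zero_gap k b i powr (1 - q)"
proof -
  have "integral {0..2*pi} (\<lambda>t. blaschke_weight k b i (cis t) powr q)
      \<le> integral {0..2*pi} (\<lambda>t. cmod (blaschke_prod_deriv \<gamma> m k b (cis t)) powr q)"
  proof (rule integral_le)
    show "(\<lambda>t. blaschke_weight k b i (cis t) powr q) integrable_on {0..2*pi}"
      using continuous_on_blaschke_weight_powr[OF b, of 1 _ i q]
      by (intro integrable_continuous_interval) simp
    show "(\<lambda>t. cmod (blaschke_prod_deriv \<gamma> m k b (cis t)) powr q) integrable_on {0..2*pi}"
      using integrable_circle_norm_powr[OF continuous_on_blaschke_prod_deriv[OF b], of q 1] q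
      by simp
    fix t
    have "blaschke_weight k b i (cis t) \<le> (\<Sum>i<m. blaschke_weight k b i (cis t))"
      using i blaschke_weight_nonneg[OF b] by (intro member_le_sum) auto
    also have "\<dots> = cmod (blaschke_prod_deriv \<gamma> m k b (cis t))"
      using norm_blaschke_prod_deriv_circle[OF \<gamma> b] by simp
    finally show "blaschke_weight k b i (cis t) powr q
        \<le> cmod (blaschke_prod_deriv \<gamma> m k b (cis t)) powr q"
      using q blaschke_weight_nonneg[OF b] by (intro powr_mono2) auto
  qed
  then show ?thesis
    using integral_blaschke_weight_powr_ge[OF b q, of i] by simp
qed

lemma Hp_norm_pow_cong_ball:
  assumes "\<And>z. cmod z < 1 \<Longrightarrow> g z = f z"
  shows "Hp_norm_pow g q = Hp_norm_pow f q"
proof -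
  have "integral {0..2*pi} (\<lambda>t. cmod (g (of_real r * cis t)) powr q)
      = integral {0..2*pi} (\<lambda>t. cmod (f (of_real r * cis t)) powr q)" if "r \<in> {0<..<1}" for r
    using that assms by (intro integral_cong) (simp add: norm_mult)
  then show ?thesis
    unfolding Hp_norm_pow_def by (intro SUP_cong) auto
qed

lemma Hp_norm_pow_blaschke_prod_deriv_ge:
  assumes \<gamma>: "cmod \<gamma> = 1" and b: "\<forall>i<k. cmod (b i) > 1" and q: "q \<ge> 1" and i: "i < m"
  shows "ereal (2 powr (- q) / (4 * pi) * blaschke_zero_gap k b i powr (1 - q))
    \<le> Hp_norm_pow (blaschke_prod_deriv \<gamma> m k b) q"
proof -
  define G where
    "G r = integral {0..2*pi} (\<lambda>t. cmod (blaschke_prod_deriv \<gamma> m k b (of_real r * cis t)) powr q)"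
    for r
  define L where "L = 2 powr (- q) * blaschke_zero_gap k b i powr (1 - q)"
  have "L \<le> G 1"
    using integral_blaschke_prod_deriv_powr_ge[OF \<gamma> b q i] unfolding G_def L_def by simp
  moreover have "continuous_on {0..1} G"
    using continuous_on_circle_integral_norm_powr[OF continuous_on_blaschke_prod_deriv[OF b], of q] q
    unfolding G_def by simp
  moreover have "0 < L"
    unfolding L_def using blaschke_zero_gap_pos[OF b, of i] by (intro mult_pos_pos) auto
  ultimately obtain r where r: "0 < r" "r < 1" "L / 2 < G r"
    using continuous_on_Icc_exists_left_of_right_end[of 0 1 G "L / 2"] by auto
  have "2 powr (- q) / (4 * pi) * blaschke_zero_gap k b i powr (1 - q) = L / 2 / (2 * pi)"
    unfolding L_def by simp
  also have "\<dots> \<le> G r / (2 * pi)"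
    using r(3) pi_gt_zero by (intro divide_right_mono) auto
  finally have "ereal (2 powr (- q) / (4 * pi) * blaschke_zero_gap k b i powr (1 - q))
      \<le> ereal (1 / (2 * pi) * G r)"
    by simp
  also have "\<dots> \<le> Hp_norm_pow (blaschke_prod_deriv \<gamma> m k b) q"
    unfolding Hp_norm_pow_def G_def using r by (intro SUP_upper) auto
  finally show ?thesis .
qed

lemma Hp_norm_pow_blaschke_prod_deriv_le:
  assumes \<gamma>: "cmod \<gamma> = 1" and b: "\<forall>i<k. cmod (b i) > 1" and q: "q \<ge> 1"
    and \<epsilon>: "0 < \<epsilon>" "\<And>i. i < m \<Longrightarrow> \<epsilon> \<le> blaschke_zero_gap k b i"
  shows "Hp_norm_pow (blaschke_prod_deriv \<gamma> m k b) q
    \<le> ereal (real m powr q * real m * 2 powr (q - 1) * \<epsilon> powr (1 - q))"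
  unfolding Hp_norm_pow_def
proof (rule SUP_least)
  fix r :: real
  assume r: "r \<in> {0<..<1}"
  have "integral {0..2*pi} (\<lambda>t. cmod (blaschke_prod_deriv \<gamma> m k b (of_real r * cis t)) powr q)
      \<le> real m powr q * (\<Sum>i<m. 2 * pi * (2 powr (q - 1) * blaschke_zero_gap k b i powr (1 - q)))"
    using r by (intro integral_blaschke_prod_deriv_powr_le \<gamma> b q) auto
  also have "\<dots> \<le> real m powr q * (\<Sum>i<m. 2 * pi * (2 powr (q - 1) * \<epsilon> powr (1 - q)))"
    using \<epsilon> q by (intro mult_left_mono sum_mono powr_mono2') auto
  also have "\<dots> = 2 * pi * (real m powr q * real m * 2 powr (q - 1) * \<epsilon> powr (1 - q))"
    by (simp add: mult_ac)
  finally show "ereal (1 / (2 * pi) * integral {0..2*pi}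
      (\<lambda>t. cmod (blaschke_prod_deriv \<gamma> m k b (of_real r * cis t)) powr q))
      \<le> ereal (real m powr q * real m * 2 powr (q - 1) * \<epsilon> powr (1 - q))"
    using pi_gt_zero by (simp add: divide_simps mult.commute)
qed

lemma Hp_norm_pow_blaschke_prod_deriv_bounds:
  assumes \<gamma>: "cmod \<gamma> = 1" and b: "\<forall>i<k. cmod (b i) > 1" and q: "q \<ge> 1" and m: "m \<ge> 1"
  defines "\<epsilon> \<equiv> Min (blaschke_zero_gap k b ` {..<m})"
  shows "ereal (2 powr (- q) / (4 * pi) * \<epsilon> powr (1 - q)) \<le> Hp_norm_pow (blaschke_prod_deriv \<gamma> m k b) q"
    and "Hp_norm_pow (blaschke_prod_deriv \<gamma> m k b) q
      \<le> ereal (real m powr q * real m * 2 powr (q - 1) * \<epsilon> powr (1 - q))"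
proof -
  have fin: "finite (blaschke_zero_gap k b ` {..<m})" "blaschke_zero_gap k b ` {..<m} \<noteq> {}"
    using m by (auto simp: lessThan_empty_iff)
  obtain i0 where i0: "i0 < m" "blaschke_zero_gap k b i0 = \<epsilon>"
    using Min_in[OF fin] unfolding \<epsilon>_def by auto
  then show "ereal (2 powr (- q) / (4 * pi) * \<epsilon> powr (1 - q)) \<le> Hp_norm_pow (blaschke_prod_deriv \<gamma> m k b) q"
    using Hp_norm_pow_blaschke_prod_deriv_ge[OF \<gamma> b q i0(1)] by simp
  have "0 < \<epsilon>"
    using blaschke_zero_gap_pos[OF b] i0(2) by metis
  moreover have "\<epsilon> \<le> blaschke_zero_gap k b i" if "i < m" for i
    unfolding \<epsilon>_def using fin that by (intro Min_le) auto
  ultimately show "Hp_norm_pow (blaschke_prod_deriv \<gamma> m k b) q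
      \<le> ereal (real m powr q * real m * 2 powr (q - 1) * \<epsilon> powr (1 - q))"
    by (rule Hp_norm_pow_blaschke_prod_deriv_le[OF \<gamma> b q])
qed

section \<open>One-variable slices\<close>

definition slice_poly :: "(nat \<Rightarrow> nat \<Rightarrow> complex) \<Rightarrow> nat \<Rightarrow> nat \<Rightarrow> complex \<Rightarrow> complex poly" where
  "slice_poly a m n \<zeta> = (\<Sum>i\<le>m. monom (\<Sum>j\<le>n. a i j * \<zeta> ^ j) i)"

lemma poly_slice_poly: "poly (slice_poly a m n \<zeta>) z = bipoly a m n z \<zeta>"
  unfolding slice_poly_def bipoly_def
  by (simp add: poly_sum poly_monom sum_distrib_left sum_distrib_right mult_ac)

lemma degree_slice_poly: "degree (slice_poly a m n \<zeta>) \<le> m"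
  unfolding slice_poly_def by (rule degree_le) (simp add: coeff_sum)

lemma reflect_eq_cnj_bipoly:
  assumes \<zeta>: "cmod \<zeta> = 1" and z: "z \<noteq> 0"
  shows "reflect a m n z \<zeta> = \<zeta> ^ n * z ^ m * cnj (bipoly a m n (1 / cnj z) \<zeta>)"
proof -
  have \<zeta>\<zeta>: "\<zeta> * cnj \<zeta> = 1"
    using \<zeta> by (simp add: complex_mult_cnj cmod_def)
  have summand: "\<zeta> ^ n * z ^ m * (cnj (a i j) * (1 / z) ^ i * cnj \<zeta> ^ j)
      = cnj (a i j) * z ^ (m - i) * \<zeta> ^ (n - j)" if "i \<le> m" "j \<le> n" for i j
  proof -
    have "z ^ m = z ^ (m - i) * z ^ i" "\<zeta> ^ n = \<zeta> ^ (n - j) * \<zeta> ^ j"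
      using that by (simp_all flip: power_add)
    moreover have "z ^ i * (1 / z) ^ i = 1" "\<zeta> ^ j * cnj \<zeta> ^ j = 1"
      using z \<zeta>\<zeta> by (simp_all add: power_one_over field_simps flip: power_mult_distrib)
    ultimately show ?thesis
      by (simp add: algebra_simps) (metis (no_types, lifting) mult.assoc mult.commute mult_1_right)
  qed
  have "\<zeta> ^ n * z ^ m * cnj (bipoly a m n (1 / cnj z) \<zeta>)
      = (\<Sum>i\<le>m. \<Sum>j\<le>n. \<zeta> ^ n * z ^ m * (cnj (a i j) * (1 / z) ^ i * cnj \<zeta> ^ j))"
    unfolding bipoly_def by (simp add: sum_distrib_left)
  also have "\<dots> = reflect a m n z \<zeta>"
    unfolding reflect_def by (intro sum.cong refl) (simp add: summand)
  finally show ?thesis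
    by simp
qed

lemma uniform_limit_bipoly_second_variable:
  assumes "w \<longlonglongrightarrow> \<zeta>"
  shows "uniform_limit (cball 0 1) (\<lambda>N z. bipoly a m n z (w N)) (\<lambda>z. bipoly a m n z \<zeta>) sequentially"
proof (rule uniform_limitI)
  fix e :: real
  assume e: "e > 0"
  define D where "D N = (\<Sum>i\<le>m. \<Sum>j\<le>n. cmod (a i j) * cmod (w N ^ j - \<zeta> ^ j))" for N
  have "D \<longlonglongrightarrow> (\<Sum>i\<le>m. \<Sum>j\<le>n. cmod (a i j) * cmod (\<zeta> ^ j - \<zeta> ^ j))"
    unfolding D_def by (intro tendsto_intros assms)
  then have "\<forall>\<^sub>F N in sequentially. D N < e"
    using e by (simp add: order_tendsto_iff)
  then show "\<forall>\<^sub>F N in sequentially. \<forall>z\<in>cball 0 1. dist (bipoly a m n z (w N)) (bipoly a m n z \<zeta>) < e"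
  proof (rule eventually_mono, intro ballI)
    fix N and z :: complex
    assume DN: "D N < e" and z: "z \<in> cball 0 1"
    have "dist (bipoly a m n z (w N)) (bipoly a m n z \<zeta>)
        = cmod (\<Sum>i\<le>m. \<Sum>j\<le>n. a i j * z ^ i * (w N ^ j - \<zeta> ^ j))"
      unfolding bipoly_def dist_norm by (simp add: sum_subtractf[symmetric] algebra_simps)
    also have "\<dots> \<le> (\<Sum>i\<le>m. \<Sum>j\<le>n. cmod (a i j * z ^ i * (w N ^ j - \<zeta> ^ j)))"
      by (rule order_trans[OF norm_sum sum_mono[OF norm_sum]])
    also have "\<dots> \<le> D N"
      unfolding D_def
    proof (intro sum_mono)
      fix i j
      have "cmod z ^ i \<le> 1"
        using z by (simp add: power_le_one)
      then show "cmod (a i j * z ^ i * (w N ^ j - \<zeta> ^ j)) \<le> cmod (a i j) * cmod (w N ^ j - \<zeta> ^ j)"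
        by (simp add: norm_mult norm_power mult.assoc mult_left_le_one_le mult_left_mono)
    qed
    finally show "dist (bipoly a m n z (w N)) (bipoly a m n z \<zeta>) < e"
      using DN by simp
  qed
qed

lemma bipoly_slice_nonzero_ball_nonconstant:
  assumes nz: "\<forall>z1 z2. cmod z1 < 1 \<longrightarrow> cmod z2 < 1 \<longrightarrow> bipoly a m n z1 z2 \<noteq> 0"
    and \<zeta>: "cmod \<zeta> = 1" and nonconst: "\<not> (\<lambda>z. bipoly a m n z \<zeta>) constant_on ball 0 1"
    and w0: "cmod w0 < 1"
  shows "bipoly a m n w0 \<zeta> \<noteq> 0"
proof (rule Hurwitz_no_zeros[of "ball 0 1" _ "\<lambda>z. bipoly a m n z \<zeta>"])
  define s :: "nat \<Rightarrow> real" where "s N = 1 + - inverse (real (Suc N))" for N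
  have s: "0 \<le> s N" "s N < 1" for N
    unfolding s_def by (auto simp: inverse_le_1_iff)
  have "s \<longlonglongrightarrow> 1"
    unfolding s_def by (rule LIMSEQ_inverse_real_of_nat_add_minus)
  then have "(\<lambda>N. of_real (s N) * \<zeta>) \<longlonglongrightarrow> of_real 1 * \<zeta>"
    by (intro tendsto_intros)
  then have lim: "uniform_limit (cball 0 1) (\<lambda>N z. bipoly a m n z (of_real (s N) * \<zeta>))
      (\<lambda>z. bipoly a m n z \<zeta>) sequentially"
    using uniform_limit_bipoly_second_variable by simp
  show "uniform_limit K (\<lambda>N z. bipoly a m n z (of_real (s N) * \<zeta>))
      (\<lambda>z. bipoly a m n z \<zeta>) sequentially" if "compact K" "K \<subseteq> ball 0 1" for K
    using lim by (rule uniform_limit_on_subset) (use that in auto)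
  show "bipoly a m n z (of_real (s N) * \<zeta>) \<noteq> 0" if "z \<in> ball 0 1" for N z
    using nz that s[of N] \<zeta> by (auto simp: norm_mult)
  show "(\<lambda>z. bipoly a m n z (of_real (s N) * \<zeta>)) holomorphic_on ball 0 1" for N
    unfolding bipoly_def by (intro holomorphic_intros)
qed (use nonconst w0 in \<open>auto simp: bipoly_def intro!: holomorphic_intros\<close>)

lemma bipoly_slice_nonzero_ball:
  assumes nz: "\<forall>z1 z2. cmod z1 < 1 \<longrightarrow> cmod z2 < 1 \<longrightarrow> bipoly a m n z1 z2 \<noteq> 0"
    and \<zeta>: "cmod \<zeta> = 1" and circle: "\<And>w. cmod w = 1 \<Longrightarrow> bipoly a m n w \<zeta> \<noteq> 0"
    and w0: "cmod w0 < 1"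
  shows "bipoly a m n w0 \<zeta> \<noteq> 0"
proof
  assume zero: "bipoly a m n w0 \<zeta> = 0"
  then have "(\<lambda>z. bipoly a m n z \<zeta>) constant_on ball 0 1"
    using bipoly_slice_nonzero_ball_nonconstant[OF nz \<zeta> _ w0] by blast
  then obtain c where c: "\<And>z. z \<in> ball 0 1 \<Longrightarrow> bipoly a m n z \<zeta> = c"
    unfolding constant_on_def by blast
  have "c = 0"
    using c[of w0] zero w0 by simp
  with c have zero_ball: "\<And>z. z \<in> ball 0 1 \<Longrightarrow> bipoly a m n z \<zeta> = 0"
    by blast
  have "continuous_on (closure (ball 0 1)) (\<lambda>z. bipoly a m n z \<zeta>)"
    unfolding bipoly_def by (intro continuous_intros)
  moreover have "(1::complex) \<in> closure (ball 0 1)"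
    by simp
  ultimately have "bipoly a m n 1 \<zeta> = 0"
    using continuous_constant_on_closure zero_ball by blast
  then show False
    using circle[of 1] by simp
qed

lemma bipoly_slice_nonzero_cball:
  assumes nz: "\<forall>z1 z2. cmod z1 < 1 \<longrightarrow> cmod z2 < 1 \<longrightarrow> bipoly a m n z1 z2 \<noteq> 0"
    and \<zeta>: "cmod \<zeta> = 1" and circle: "\<forall>z. cmod z = 1 \<longrightarrow> reflect a m n z \<zeta> \<noteq> 0"
    and w: "cmod w \<le> 1"
  shows "bipoly a m n w \<zeta> \<noteq> 0"
proof -
  have "bipoly a m n w \<zeta> \<noteq> 0" if "cmod w = 1" for w
  proof -
    have "1 / cnj w = w"
      using that by (simp add: complex_div_cnj[symmetric] divide_conv_cnj)
    moreover have "w \<noteq> 0"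
      using that by auto
    ultimately have "reflect a m n w \<zeta> = \<zeta> ^ n * w ^ m * cnj (bipoly a m n w \<zeta>)"
      using reflect_eq_cnj_bipoly[OF \<zeta>, of w] by simp
    then show ?thesis
      using circle that by auto
  qed
  then show ?thesis
    using bipoly_slice_nonzero_ball[OF nz \<zeta>] w by (cases "cmod w = 1") auto
qed

lemma complex_poly_factorization_roots_outside_cball:
  fixes p :: "complex poly"
  assumes nz: "\<And>w. cmod w \<le> 1 \<Longrightarrow> poly p w \<noteq> 0"
  obtains b where "lead_coeff p \<noteq> 0" "\<forall>i<degree p. cmod (b i) > 1"
    "\<And>w. poly p w = lead_coeff p * (\<Prod>i<degree p. w - b i)"
proof -
  obtain b where fac: "smult (lead_coeff p) (\<Prod>i<degree p. [:-b i, 1:]) = p"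
    using complex_poly_decompose' by blast
  have eq: "poly p w = lead_coeff p * (\<Prod>i<degree p. w - b i)" for w
    by (subst fac[symmetric]) (simp add: poly_prod)
  have "p \<noteq> 0"
    using nz[of 0] by auto
  moreover have "cmod (b i) > 1" if "i < degree p" for i
  proof (rule ccontr)
    assume "\<not> cmod (b i) > 1"
    moreover have "poly p (b i) = 0"
      unfolding eq using that by (auto intro!: prod_zero)
    ultimately show False
      using nz by simp
  qed
  ultimately show ?thesis
    using eq by (intro that[of b]) auto
qed

lemma isCont_eq_of_eq_punctured:
  fixes f g :: "'a::{perfect_space, t2_space} \<Rightarrow> 'b::t2_space"
  assumes "isCont f x" "isCont g x" "\<And>z. z \<noteq> x \<Longrightarrow> f z = g z"
  shows "f x = g x"
proof -
  have "(f \<longlongrightarrow> g x) (at x)"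
    using assms(2) unfolding isCont_def
    by (rule Lim_transform_eventually) (simp add: assms(3) eventually_at_filter)
  with assms(1) show ?thesis
    unfolding isCont_def by (rule tendsto_unique[rotated]) simp
qed

lemma reflect_slice_factorization:
  assumes \<zeta>: "cmod \<zeta> = 1" and k: "k \<le> m"
    and P: "\<And>w. bipoly a m n w \<zeta> = c * (\<Prod>i<k. w - b i)"
  shows "reflect a m n z \<zeta> = \<zeta> ^ n * cnj c * z ^ (m - k) * (\<Prod>i<k. 1 - cnj (b i) * z)"
proof -
  define Q where "Q z = \<zeta> ^ n * cnj c * z ^ (m - k) * (\<Prod>i<k. 1 - cnj (b i) * z)" for z
  have nonzero: "reflect a m n z \<zeta> = Q z" if z: "z \<noteq> 0" for z
  proof -
    have "reflect a m n z \<zeta> = \<zeta> ^ n * (z ^ (m - k) * (\<Prod>i<k. z)) * cnj (bipoly a m n (1 / cnj z) \<zeta>)"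
      using reflect_eq_cnj_bipoly[OF \<zeta> z] k by (simp flip: power_add)
    also have "cnj (bipoly a m n (1 / cnj z) \<zeta>) = cnj c * (\<Prod>i<k. 1 / z - cnj (b i))"
      unfolding P by (simp add: cnj_prod)
    also have "(\<Prod>i<k. z) * (\<Prod>i<k. 1 / z - cnj (b i)) = (\<Prod>i<k. 1 - cnj (b i) * z)"
      unfolding prod.distrib[symmetric] using z by (intro prod.cong) (simp_all add: field_simps)
    ultimately show ?thesis
      unfolding Q_def by (simp add: mult_ac)
  qed
  moreover have "reflect a m n 0 \<zeta> = Q 0"
    using nonzero
    by (intro isCont_eq_of_eq_punctured[where f = "\<lambda>z. reflect a m n z \<zeta>" and g = Q and x = 0])
      (auto simp: reflect_def Q_def[abs_def] intro!: continuous_intros)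
  ultimately show ?thesis
    unfolding Q_def by (cases "z = 0") auto
qed

lemma deriv_quotient_eq_blaschke_prod_deriv:
  assumes k: "k \<le> m" and c: "c \<noteq> 0" and b: "\<forall>i<k. cmod (b i) > 1"
    and P: "\<And>w. P w = c * (\<Prod>i<k. w - b i)"
    and R: "\<And>w. R w = u * cnj c * w ^ (m - k) * (\<Prod>i<k. 1 - cnj (b i) * w)"
    and z: "cmod z \<le> 1"
  shows "deriv (\<lambda>w. R w / P w) z = blaschke_prod_deriv (u * cnj c / c) m k b z"
proof -
  define U where "U = - (b ` {..<k})"
  have "open U"
    unfolding U_def by (intro open_Compl finite_imp_closed) auto
  moreover have zU: "z \<in> U"
    unfolding U_def using b z by force
  ultimately have "\<forall>\<^sub>F w in nhds z. w \<in> U"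
    by (rule eventually_nhds_in_open)
  then have "\<forall>\<^sub>F w in nhds z. R w / P w = blaschke_prod (u * cnj c / c) m k b w"
  proof eventually_elim
    case (elim w)
    then have "(\<Prod>i<k. w - b i) \<noteq> 0"
      unfolding U_def by auto
    then show ?case
      unfolding P R blaschke_prod_def prod_blaschke_term[OF k] blaschke_factor_def
      using c by (simp add: prod_dividef field_simps)
  qed
  then have "deriv (\<lambda>w. R w / P w) z = deriv (blaschke_prod (u * cnj c / c) m k b) z"
    by (rule deriv_cong_ev) simp
  also have "\<dots> = blaschke_prod_deriv (u * cnj c / c) m k b z"
    using zU unfolding U_def by (intro DERIV_imp_deriv has_field_derivative_blaschke_prod) auto
  finally show ?thesis .
qed

lemma zero_iff_reflected_factorization:
  assumes c: "c \<noteq> 0" and u: "u \<noteq> 0" and b: "\<forall>i<k. cmod (b i) > 1"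
  shows "u * cnj c * z ^ (m - k) * (\<Prod>i<k. 1 - cnj (b i) * z) = 0
    \<longleftrightarrow> (z = 0 \<and> k < m) \<or> (\<exists>i<k. z = 1 / cnj (b i))"
proof -
  have "cnj (b i) \<noteq> 0" if "i < k" for i
    using b that by auto
  then have "1 - cnj (b i) * z = 0 \<longleftrightarrow> z = 1 / cnj (b i)" if "i < k" for i
    using that by (auto simp: field_simps)
  then show ?thesis
    using u c by (auto simp: prod_zero_iff)
qed

lemma eps_phi_eq_Min_blaschke_zero_gap:
  assumes m: "m \<ge> 1" and k: "k \<le> m" and c: "c \<noteq> 0" and \<zeta>: "\<zeta> \<noteq> 0"
    and b: "\<forall>i<k. cmod (b i) > 1"
    and R: "\<And>z. reflect a m n z \<zeta> = \<zeta> ^ n * cnj c * z ^ (m - k) * (\<Prod>i<k. 1 - cnj (b i) * z)"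
  shows "eps_phi a m n \<zeta> = Min (blaschke_zero_gap k b ` {..<m})"
proof -
  have zeros: "reflect a m n z \<zeta> = 0 \<longleftrightarrow> (z = 0 \<and> k < m) \<or> (\<exists>i<k. z = 1 / cnj (b i))" for z
    unfolding R using zero_iff_reflected_factorization[OF c _ b] \<zeta> by simp
  have "(\<lambda>z. 1 - cmod z) ` {z. reflect a m n z \<zeta> = 0} = blaschke_zero_gap k b ` {..<m}"
  proof (intro equalityI subsetI)
    fix x
    assume "x \<in> (\<lambda>z. 1 - cmod z) ` {z. reflect a m n z \<zeta> = 0}"
    then obtain z where x: "x = 1 - cmod z" and "reflect a m n z \<zeta> = 0"
      by auto
    then consider "z = 0" "k < m" | i where "i < k" "z = 1 / cnj (b i)"
      using zeros by auto
    then show "x \<in> blaschke_zero_gap k b ` {..<m}"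
    proof cases
      case 1
      then show ?thesis
        using x unfolding blaschke_zero_gap_def by (auto intro!: image_eqI[of _ _ k])
    next
      case 2
      then show ?thesis
        using x k unfolding blaschke_zero_gap_def by (auto intro!: image_eqI[of _ _ i] simp: norm_divide)
    qed
  next
    fix x
    assume "x \<in> blaschke_zero_gap k b ` {..<m}"
    then obtain i where i: "i < m" "x = blaschke_zero_gap k b i"
      by auto
    show "x \<in> (\<lambda>z. 1 - cmod z) ` {z. reflect a m n z \<zeta> = 0}"
    proof (cases "i < k")
      case True
      then show ?thesis
        using i zeros[of "1 / cnj (b i)"] unfolding blaschke_zero_gap_def
        by (auto intro!: image_eqI[of _ _ "1 / cnj (b i)"] simp: norm_divide)
    next
      case False
      then show ?thesis
        using i zeros[of 0] unfolding blaschke_zero_gap_def by (auto intro!: image_eqI[of _ _ 0])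
    qed
  qed
  then have "eps_phi a m n \<zeta> = Inf (blaschke_zero_gap k b ` {..<m})"
    unfolding eps_phi_def by simp
  also have "\<dots> = Min (blaschke_zero_gap k b ` {..<m})"
    using m by (intro cInf_eq_Min) (auto simp: lessThan_empty_iff)
  finally show ?thesis .
qed

lemma slice_quotient_blaschke_representation:
  assumes m: "m \<ge> 1"
    and nz: "\<forall>z1 z2. cmod z1 < 1 \<longrightarrow> cmod z2 < 1 \<longrightarrow> bipoly a m n z1 z2 \<noteq> 0"
    and \<zeta>: "cmod \<zeta> = 1" and circle: "\<forall>z. cmod z = 1 \<longrightarrow> reflect a m n z \<zeta> \<noteq> 0"
  obtains \<gamma> k b where "cmod \<gamma> = 1" "\<forall>i<k. cmod (b i) > 1"
    "\<And>z. cmod z < 1 \<Longrightarrow>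
       deriv (\<lambda>w. reflect a m n w \<zeta> / bipoly a m n w \<zeta>) z = blaschke_prod_deriv \<gamma> m k b z"
    "eps_phi a m n \<zeta> = Min (blaschke_zero_gap k b ` {..<m})"
proof -
  define p where "p = slice_poly a m n \<zeta>"
  define c where "c = lead_coeff p"
  define k where "k = degree p"
  have nonzero: "poly p w \<noteq> 0" if "cmod w \<le> 1" for w
    unfolding p_def poly_slice_poly using bipoly_slice_nonzero_cball[OF nz \<zeta> circle that] .
  obtain b where "lead_coeff p \<noteq> 0" "\<forall>i<degree p. cmod (b i) > 1"
    "\<And>w. poly p w = lead_coeff p * (\<Prod>i<degree p. w - b i)"
    using complex_poly_factorization_roots_outside_cball[OF nonzero] by blast
  then have c: "c \<noteq> 0" and b: "\<forall>i<k. cmod (b i) > 1"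
    and P: "\<And>w. bipoly a m n w \<zeta> = c * (\<Prod>i<k. w - b i)"
    unfolding c_def k_def by (simp_all flip: poly_slice_poly add: p_def)
  have k: "k \<le> m"
    unfolding k_def p_def by (rule degree_slice_poly)
  note R = reflect_slice_factorization[OF \<zeta> k P]
  show ?thesis
  proof (rule that[of "\<zeta> ^ n * cnj c / c" k b])
    show "cmod (\<zeta> ^ n * cnj c / c) = 1"
      using \<zeta> c by (simp add: norm_mult norm_divide norm_power)
    show "deriv (\<lambda>w. reflect a m n w \<zeta> / bipoly a m n w \<zeta>) z = blaschke_prod_deriv (\<zeta> ^ n * cnj c / c) m k b z"
      if "cmod z < 1" for z
      using that by (intro deriv_quotient_eq_blaschke_prod_deriv[OF k c b P R]) simp
    show "eps_phi a m n \<zeta> = Min (blaschke_zero_gap k b ` {..<m})"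
      using \<zeta> by (intro eps_phi_eq_Min_blaschke_zero_gap[OF m k c _ b R]) auto
  qed (rule b)
qed

lemma two_powr_neg_div_four_pi_le:
  fixes q :: real
  assumes q: "q \<ge> 1" and m: "m \<ge> 1"
  shows "2 powr (- q) / (4 * pi) \<le> real m powr q * real m * 2 powr (q - 1)"
proof -
  have "2 powr (- q) \<le> 1"
    using q by (simp add: powr_minus inverse_le_1_iff ge_one_powr_ge_zero)
  then have "2 powr (- q) / (4 * pi) \<le> 1"
    using pi_gt3 by (simp add: divide_le_eq)
  also have "1 \<le> real m powr q * real m * 2 powr (q - 1)"
  proof -
    have "1 \<le> real m powr q" "1 \<le> real m" "1 \<le> 2 powr (q - 1)"
      using q m by (auto intro: ge_one_powr_ge_zero)
    then show ?thesis
      by (metis mult_mono' mult_1 order_trans zero_le_one)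
  qed
  finally show ?thesis .
qed

theorem lemma4p3:
  fixes q :: real and m :: nat
  assumes "q \<ge> 1" and "m \<ge> 1"
  shows "\<exists>c C. 0 < c \<and> c \<le> C \<and>
    (\<forall>(a :: nat \<Rightarrow> nat \<Rightarrow> complex) (n :: nat) (\<zeta> :: complex).
       has_bidegree a m n \<longrightarrow>
       (\<forall>z1 z2. cmod z1 < 1 \<longrightarrow> cmod z2 < 1 \<longrightarrow> bipoly a m n z1 z2 \<noteq> 0) \<longrightarrow>
       atoral a m n \<longrightarrow>
       cmod \<zeta> = 1 \<longrightarrow>
       (\<forall>z. cmod z = 1 \<longrightarrow> reflect a m n z \<zeta> \<noteq> 0) \<longrightarrow>
       ereal (c * eps_phi a m n \<zeta> powr (1 - q))
         \<le> Hp_norm_pow (deriv (\<lambda>w. reflect a m n w \<zeta> / bipoly a m n w \<zeta>)) q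
       \<and> Hp_norm_pow (deriv (\<lambda>w. reflect a m n w \<zeta> / bipoly a m n w \<zeta>)) q
         \<le> ereal (C * eps_phi a m n \<zeta> powr (1 - q)))"
proof (rule exI[of _ "2 powr (- q) / (4 * pi)"],
    rule exI[of _ "real m powr q * real m * 2 powr (q - 1)"], intro conjI allI impI)
  note q = assms(1) and m = assms(2)
  show "0 < 2 powr (- q) / (4 * pi)"
    by simp
  show "2 powr (- q) / (4 * pi) \<le> real m powr q * real m * 2 powr (q - 1)"
    using q m by (rule two_powr_neg_div_four_pi_le)
  fix a :: "nat \<Rightarrow> nat \<Rightarrow> complex" and n :: nat and \<zeta> :: complex
  assume nz: "\<forall>z1 z2. cmod z1 < 1 \<longrightarrow> cmod z2 < 1 \<longrightarrow> bipoly a m n z1 z2 \<noteq> 0"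
    and \<zeta>: "cmod \<zeta> = 1" and circle: "\<forall>z. cmod z = 1 \<longrightarrow> reflect a m n z \<zeta> \<noteq> 0"
  obtain \<gamma> k b where \<gamma>: "cmod \<gamma> = 1" and b: "\<forall>i<k. cmod (b i) > 1"
    and deriv: "\<And>z. cmod z < 1 \<Longrightarrow>
       deriv (\<lambda>w. reflect a m n w \<zeta> / bipoly a m n w \<zeta>) z = blaschke_prod_deriv \<gamma> m k b z"
    and eps: "eps_phi a m n \<zeta> = Min (blaschke_zero_gap k b ` {..<m})"
    using slice_quotient_blaschke_representation[OF m nz \<zeta> circle] by blast
  from Hp_norm_pow_blaschke_prod_deriv_bounds[OF \<gamma> b q m] Hp_norm_pow_cong_ball[OF deriv]
  show "ereal (2 powr (- q) / (4 * pi) * eps_phi a m n \<zeta> powr (1 - q))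
      \<le> Hp_norm_pow (deriv (\<lambda>w. reflect a m n w \<zeta> / bipoly a m n w \<zeta>)) q"
    and "Hp_norm_pow (deriv (\<lambda>w. reflect a m n w \<zeta> / bipoly a m n w \<zeta>)) q
      \<le> ereal (real m powr q * real m * 2 powr (q - 1) * eps_phi a m n \<zeta> powr (1 - q))"
    unfolding eps by auto
qed

end
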